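(* Let $\mathcal S$ be a system and $\mathcal T$ a target behavior. If $\tilde{\mathcal T}_1$ and $\tilde{\mathcal T}_2$ are both optimal approximations of $\mathcal T$ on $\mathcal S$, then $\tilde{\mathcal T}_1\sim\tilde{\mathcal T}_2$; i.e., the optimal approximation is unique up to simulation equivalence.
   Context: A behavior is a tuple $\mathcal B=\langle B,\mathcal A,b_0,\varrho\rangle$ with $B$ a finite set of states, $\mathcal A$ a set of actions, $b_0\in B$ the initial state, and $\varrho\subseteq B\times\mathcal A\times B$ a transition relation (written $b\xrightarrow{a}b'$); every state is assumed to have at least one outgoing transition. A system is a tuple $\mathcal S=\langle\mathcal B_1,\dots,\mathcal B_n\rangle$ of behaviors $\mathcal B_i=\langle B_i,\mathcal A_i,b_{i0},\varrho_i\rangle$. Its enacted system has states $B_1\times\dots\times B_n$ (for a state $s$, $\mathrm{beh}_i(s)$ denotes its $i$-th component), initial state $s_0=\langle b_{10},\dots,b_{n0}\rangle$, and transitions $s\xrightarrow{a,k}s'$ iff $\mathrm{beh}_k(s)\xrightarrow{a}\mathrm{beh}_k(s')$ in $\mathcal B_k$ and $\mathrm{beh}_i(s')=\mathrm{beh}_i(s)$ for all $i\neq k$. A system history is a finite sequence $h=s^0\xrightarrow{a^1,k^1}s^1\cdots\xrightarrow{a^\ell,k^\ell}s^\ell$ of enacted-system transitions with $s^0=s_0$; $\mathcal H_{\mathcal S}$ is the set of system histories, $|h|=\ell$, $\mathrm{last}(h)=s^\ell$, and $h|_i$ is the prefix of length $i$. A target behavior $\mathcal T=\langle T,\mathcal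 A,t_0,\varrho_T\rangle$ is a (possibly nondeterministic) behavior; a trace of $\mathcal T$ is a finite or infinite sequence $t^0\xrightarrow{a^1}t^1\xrightarrow{a^2}\cdots$ with $t^0=t_0$ and each step in $\varrho_T$. A controller for $\mathcal T$ on $\mathcal S$ is a partial function $C:\mathcal H_{\mathcal S}\times\varrho_T\to\{1,\dots,n\}$. $C$ realizes a trace $\tau=t^0\xrightarrow{a^1}t^1\xrightarrow{a^2}\cdots$ of $\mathcal T$ if for every $j$ such that $\tau$ has a step $t^j\xrightarrow{a^{j+1}}t^{j+1}$, and every system history $h=s^0\xrightarrow{a^1,k^1}\cdots\xrightarrow{a^j,k^j}s^j$ with $k^i=C(h|_{i-1},t^{i-1}\xrightarrow{a^i}t^i)$ for all $1\le i\le j$, the value $k=C(h,t^j\xrightarrow{a^{j+1}}t^{j+1})$ is defined and $\mathrm{beh}_k(s^j)$ has an outgoing $a^{j+1}$-transition in $\mathcal B_k$. $C$ is an exact composition for $\mathcal T$ on $\mathcal S$ if it realizes all traces of $\mathcal T$. For target behaviors $\mathcal T_i=\langle T_i,\mathcal A,t_{i0},\varrho_i\rangle$ ($i=1,2$), a simulation of $\mathcal T_2$ by $\mathcal T_1$ is a relation $R\subseteq T_2\times T_1$ such that $\langle t_2,t_1\rangle\in R$ and $\langle t_2,a,t_2'\rangle\in\varrho_2$ imply some $\langle t_1,a,t_1'\rangle\in\varrho_1$ with $\langle t_2',t_1'\rangle\in R$. $\mathcal T_2\preceq\mathcal T_1$ iff some simulation contains $\langle t_{20},t_{10}\rangle$;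 $\mathcal T_2\prec\mathcal T_1$ iff $\mathcal T_2\preceq\mathcal T_1$ and not $\mathcal T_1\preceq\mathcal T_2$; $\mathcal T_1\sim\mathcal T_2$ iff both $\preceq$ hold. $\tilde{\mathcal T}$ is an approximation of $\mathcal T$ on $\mathcal S$ iff $\tilde{\mathcal T}\preceq\mathcal T$ and there is an exact composition for $\tilde{\mathcal T}$ on $\mathcal S$. $\tilde{\mathcal T}$ is an optimal approximation of $\mathcal T$ on $\mathcal S$ iff it is an approximation of $\mathcal T$ on $\mathcal S$ and there is no approximation $\tilde{\mathcal T}'$ of $\mathcal T$ on $\mathcal S$ with $\tilde{\mathcal T}\prec\tilde{\mathcal T}'$. *)

theory Defs
  imports Main "HOL-Library.Extended_Nat"
begin

record ('s, 'a) behavior =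
  states :: "'s set"
  acts   :: "'a set"
  init   :: 's
  trans  :: "('s \<times> 'a \<times> 's) set"

definition is_behavior :: "('s, 'a) behavior \<Rightarrow> bool" where
  "is_behavior B \<longleftrightarrow>
     finite (states B) \<and> init B \<in> states B \<and>
     trans B \<subseteq> states B \<times> acts B \<times> states B \<and>
     (\<forall>b\<in>states B. \<exists>a b'. (b, a, b') \<in> trans B)"

type_synonym ('b, 'a) system = "('b, 'a) behavior list"

definition is_system :: "('b, 'a) system \<Rightarrow> bool" where
  "is_system S \<longleftrightarrow> (\<forall>B\<in>set S. is_behavior B)"

definition enacted_init :: "('b, 'a) system \<Rightarrow> 'b list" where
  "enacted_init S = map init S"

definition enacted_state :: "('b, 'a) system \<Rightarrow> 'b list \<Rightarrow> bool" where
  "enacted_state S s \<longleftrightarrow> length s = length S \<and> (\<forall>i<length S. s ! i \<in> states (S ! i))"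

definition enacted_step :: "('b, 'a) system \<Rightarrow> 'b list \<Rightarrow> 'a \<Rightarrow> nat \<Rightarrow> 'b list \<Rightarrow> bool" where
  "enacted_step S s a k s' \<longleftrightarrow>
     enacted_state S s \<and> enacted_state S s' \<and> k < length S \<and>
     (s ! k, a, s' ! k) \<in> trans (S ! k) \<and>
     (\<forall>i<length S. i \<noteq> k \<longrightarrow> s' ! i = s ! i)"

text \<open>A system history s0 --a1,k1--> s1 ... is represented by the list of its steps
  [(a1,k1,s1), ..., (al,kl,sl)]; its first state is always the enacted initial state.\<close>
type_synonym ('b, 'a) history = "('a \<times> nat \<times> 'b list) list"

definition hist_last :: "('b, 'a) system \<Rightarrow> ('b, 'a) history \<Rightarrow> 'b list" where
  "hist_last S h = (if h = [] then enacted_init S else snd (snd (last h)))"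

definition is_history :: "('b, 'a) system \<Rightarrow> ('b, 'a) history \<Rightarrow> bool" where
  "is_history S h \<longleftrightarrow>
     (\<forall>i<length h. enacted_step S (hist_last S (take i h))
                      (fst (h ! i)) (fst (snd (h ! i))) (snd (snd (h ! i))))"

type_synonym ('b, 'a, 't) controller = "('b, 'a) history \<Rightarrow> ('t \<times> 'a \<times> 't) \<Rightarrow> nat option"

text \<open>A (finite or infinite) trace of T: states t 0, t 1, ..., actions a 1, a 2, ...,
  with len steps (len = \<infinity> for an infinite trace).\<close>
definition is_trace :: "('t, 'a) behavior \<Rightarrow> (nat \<Rightarrow> 't) \<Rightarrow> (nat \<Rightarrow> 'a) \<Rightarrow> enat \<Rightarrow> bool" where
  "is_trace T t a len \<longleftrightarrow>
     t 0 = init T \<and> (\<forall>j. enat j < len \<longrightarrow> (t j, a (Suc j), t (Suc j)) \<in> trans T)"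

definition realizes ::
  "('b, 'a) system \<Rightarrow> ('b, 'a, 't) controller \<Rightarrow> (nat \<Rightarrow> 't) \<Rightarrow> (nat \<Rightarrow> 'a) \<Rightarrow> enat \<Rightarrow> bool" where
  "realizes S C t a len \<longleftrightarrow>
     (\<forall>j h. enat j < len \<longrightarrow> is_history S h \<longrightarrow> length h = j \<longrightarrow>
        (\<forall>i<j. fst (h ! i) = a (Suc i) \<and>
               C (take i h) (t i, a (Suc i), t (Suc i)) = Some (fst (snd (h ! i)))) \<longrightarrow>
        (\<exists>k. C h (t j, a (Suc j), t (Suc j)) = Some k \<and> k < length S \<and>
             (\<exists>b'. (hist_last S h ! k, a (Suc j), b') \<in> trans (S ! k))))"

definition exact_composition ::
  "('b, 'a, 't) controller \<Rightarrow> ('t, 'a) behavior \<Rightarrow> ('b, 'a) system \<Rightarrow> bool" where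
  "exact_composition C T S \<longleftrightarrow>
     (\<forall>t a len. is_trace T t a len \<longrightarrow> realizes S C t a len)"

definition is_simulation :: "('t2 \<times> 't1) set \<Rightarrow> ('t2, 'a) behavior \<Rightarrow> ('t1, 'a) behavior \<Rightarrow> bool" where
  "is_simulation R T2 T1 \<longleftrightarrow>
     R \<subseteq> states T2 \<times> states T1 \<and>
     (\<forall>t2 t1 a t2'. (t2, t1) \<in> R \<longrightarrow> (t2, a, t2') \<in> trans T2 \<longrightarrow>
        (\<exists>t1'. (t1, a, t1') \<in> trans T1 \<and> (t2', t1') \<in> R))"

definition simulated_by :: "('t2, 'a) behavior \<Rightarrow> ('t1, 'a) behavior \<Rightarrow> bool" (infix "\<preceq>\<^sub>s" 50) where
  "T2 \<preceq>\<^sub>s T1 \<longleftrightarrow> (\<exists>R. is_simulation R T2 T1 \<and> (init T2, init T1) \<in> R)"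

definition strictly_simulated_by :: "('t2, 'a) behavior \<Rightarrow> ('t1, 'a) behavior \<Rightarrow> bool" (infix "\<prec>\<^sub>s" 50) where
  "T2 \<prec>\<^sub>s T1 \<longleftrightarrow> T2 \<preceq>\<^sub>s T1 \<and> \<not> T1 \<preceq>\<^sub>s T2"

definition sim_equiv :: "('t1, 'a) behavior \<Rightarrow> ('t2, 'a) behavior \<Rightarrow> bool" (infix "\<sim>\<^sub>s" 50) where
  "T1 \<sim>\<^sub>s T2 \<longleftrightarrow> T1 \<preceq>\<^sub>s T2 \<and> T2 \<preceq>\<^sub>s T1"

definition approximation :: "('t, 'a) behavior \<Rightarrow> ('b, 'a) system \<Rightarrow> ('u, 'a) behavior \<Rightarrow> bool" where
  "approximation T S Ta \<longleftrightarrow>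
     is_behavior Ta \<and> acts Ta = acts T \<and> Ta \<preceq>\<^sub>s T \<and>
     (\<exists>C :: ('b, 'a, 'u) controller. exact_composition C Ta S)"

text \<open>Competing approximations range
  over behaviors with states in nat; since behaviors have finite state sets, every
  behavior is isomorphic to one of this form.\<close>
definition optimal_approximation :: "('t, 'a) behavior \<Rightarrow> ('b, 'a) system \<Rightarrow> ('u, 'a) behavior \<Rightarrow> bool" where
  "optimal_approximation T S Ta \<longleftrightarrow>
     approximation T S Ta \<and>
     \<not> (\<exists>Ta' :: (nat, 'a) behavior. approximation T S Ta' \<and> Ta \<prec>\<^sub>s Ta')"

end

theory Submission
  imports Defs
begin

(* Idea: approximations are closed under "nondeterministic choice".  Given two
   approximations T1, T2 of T, the behavior choice_union T1 T2 starts in a fresh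
   state and moves on its first step into either copy; a controller for it just
   follows the controller of the copy it entered.  It is again an approximation and
   simulates both T1 and T2.  Since optimality only quantifies over behaviors with
   states in nat, we also show that every approximation can be renamed injectively
   into nat (rename_behavior), giving a simulation-equivalent approximation.
   Hence an optimal T1 simulates every approximation simulating it
   (optimal_approximation_maximal), and for optimal T1, T2 the union U gives
   T2 \<preceq> U \<preceq> T1 and symmetrically.
   Both controller constructions rest on realizes_transfer: whether a trace is
   realized depends only on the controller's answers on that trace's transitions. *)

lemma simulated_by_trans:
  assumes "A \<preceq>\<^sub>s B" "B \<preceq>\<^sub>s C" shows "A \<preceq>\<^sub>s C"
proof -
  obtain R1 where R1: "is_simulation R1 A B" "(init A, init B) \<in> R1"
    using assms(1) unfolding simulated_by_def by blast
  obtain R2 where R2: "is_simulation R2 B C" "(init B, init C) \<in> R2"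
    using assms(2) unfolding simulated_by_def by blast
  have "is_simulation (R1 O R2) A C"
    unfolding is_simulation_def
  proof (intro conjI allI impI)
    show "R1 O R2 \<subseteq> states A \<times> states C"
      using R1(1) R2(1) unfolding is_simulation_def by blast
    fix x z a x' assume "(x, z) \<in> R1 O R2" "(x, a, x') \<in> trans A"
    then obtain y where y: "(x, y) \<in> R1" "(y, z) \<in> R2" by blast
    then obtain y' where "(y, a, y') \<in> trans B" "(x', y') \<in> R1"
      using R1(1) \<open>(x, a, x') \<in> trans A\<close> unfolding is_simulation_def by blast
    moreover from this obtain z' where "(z, a, z') \<in> trans C" "(y', z') \<in> R2"
      using R2(1) y(2) unfolding is_simulation_def by blast
    ultimately show "\<exists>z'. (z, a, z') \<in> trans C \<and> (x', z') \<in> R1 O R2" by blast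
  qed
  with R1(2) R2(2) show ?thesis unfolding simulated_by_def by blast
qed

section \<open>Realizability depends only on the transitions of the trace\<close>

lemma realizes_transfer:
  assumes realized: "realizes S C t' a len"
    and agree: "\<And>j h. enat j < len \<Longrightarrow>
      C' h (t j, a (Suc j), t (Suc j)) = C h (t' j, a (Suc j), t' (Suc j))"
  shows "realizes S C' t a len"
  unfolding realizes_def
proof (intro allI impI)
  fix j h
  assume j: "enat j < len" and h: "is_history S h" "length h = j"
    and follows: "\<forall>i<j. fst (h ! i) = a (Suc i) \<and>
       C' (take i h) (t i, a (Suc i), t (Suc i)) = Some (fst (snd (h ! i)))"
  have "enat i < len" if "i < j" for i
    using j that by (meson enat_ord_simps(2) order_less_trans)
  then have "\<forall>i<j. fst (h ! i) = a (Suc i) \<and>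
       C (take i h) (t' i, a (Suc i), t' (Suc i)) = Some (fst (snd (h ! i)))"
    using follows agree by metis
  with realized j h show "\<exists>k. C' h (t j, a (Suc j), t (Suc j)) = Some k \<and> k < length S \<and>
      (\<exists>b'. (hist_last S h ! k, a (Suc j), b') \<in> trans (S ! k))"
    unfolding realizes_def agree[OF j] by blast
qed

lemma realizes_empty_trace: "realizes S C t a 0"
  unfolding realizes_def by (simp add: zero_enat_def[symmetric])

section \<open>Renaming the states of a behavior\<close>

definition rename_behavior :: "('u \<Rightarrow> 'v) \<Rightarrow> ('u, 'a) behavior \<Rightarrow> ('v, 'a) behavior" where
  "rename_behavior f U = \<lparr>states = f ` states U, acts = acts U, init = f (init U),
     trans = (\<lambda>(x, a, y). (f x, a, f y)) ` trans U\<rparr>"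

lemma rename_trans_iff:
  "(x', a, y') \<in> trans (rename_behavior f U) \<longleftrightarrow> (\<exists>x y. (x, a, y) \<in> trans U \<and> x' = f x \<and> y' = f y)"
  unfolding rename_behavior_def by force

lemma is_behavior_rename:
  assumes U: "is_behavior U" shows "is_behavior (rename_behavior f U)"
  unfolding is_behavior_def
proof (intro conjI ballI)
  show "finite (states (rename_behavior f U))" "init (rename_behavior f U) \<in> states (rename_behavior f U)"
    using U unfolding is_behavior_def rename_behavior_def by auto
  show "trans (rename_behavior f U) \<subseteq> states (rename_behavior f U) \<times> acts (rename_behavior f U) \<times> states (rename_behavior f U)"
    using U unfolding is_behavior_def by (auto simp: rename_trans_iff) (auto simp: rename_behavior_def)
  fix b assume "b \<in> states (rename_behavior f U)"
  then obtain x where "x \<in> states U" "b = f x" by (auto simp: rename_behavior_def)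
  then show "\<exists>a b'. (b, a, b') \<in> trans (rename_behavior f U)"
    using U unfolding is_behavior_def rename_trans_iff by blast
qed

text \<open>The graph of f is a simulation in both directions; the converse direction
  needs injectivity, so that a renamed transition starts from the right state.\<close>

lemma rename_simulates:
  assumes "is_behavior U" shows "U \<preceq>\<^sub>s rename_behavior f U"
proof -
  let ?R = "{(x, f x) | x. x \<in> states U}"
  have "is_simulation ?R U (rename_behavior f U)"
    using assms unfolding is_simulation_def is_behavior_def rename_trans_iff
    by (auto simp: rename_behavior_def)
  then show ?thesis
    using assms unfolding simulated_by_def is_behavior_def rename_behavior_def by auto
qed

lemma rename_simulated:
  assumes U: "is_behavior U" and inj: "inj_on f (states U)"
  shows "rename_behavior f U \<preceq>\<^sub>s U"
proof -
  let ?R = "{(f x, x) | x. x \<in> states U}"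
  have trU: "trans U \<subseteq> states U \<times> acts U \<times> states U"
    using U unfolding is_behavior_def by auto
  have "is_simulation ?R (rename_behavior f U) U"
    unfolding is_simulation_def
  proof (intro conjI allI impI)
    show "?R \<subseteq> states (rename_behavior f U) \<times> states U" by (auto simp: rename_behavior_def)
    fix fx x a y' assume "(fx, x) \<in> ?R" "(fx, a, y') \<in> trans (rename_behavior f U)"
    then obtain x0 y where "(x0, a, y) \<in> trans U" "x \<in> states U" "f x0 = f x" "y' = f y"
      unfolding rename_behavior_def by auto
    moreover then have "x0 = x" using trU inj by (auto dest: inj_onD)
    ultimately show "\<exists>x'. (x, a, x') \<in> trans U \<and> (y', x') \<in> ?R" using trU by auto
  qed
  then show ?thesis
    using U unfolding simulated_by_def is_behavior_def rename_behavior_def by auto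
qed

lemma exact_composition_rename:
  assumes U: "is_behavior U" and inj: "inj_on f (states U)"
    and C: "exact_composition C U S"
  shows "exact_composition (\<lambda>h (s, a, s'). C h (inv_into (states U) f s, a, inv_into (states U) f s'))
           (rename_behavior f U) S"
  unfolding exact_composition_def
proof (intro allI impI)
  let ?g = "inv_into (states U) f"
  fix t a len assume tr: "is_trace (rename_behavior f U) t a len"
  have trU: "trans U \<subseteq> states U \<times> acts U \<times> states U" and iU: "init U \<in> states U"
    using U unfolding is_behavior_def by auto
  have "is_trace U (?g \<circ> t) a len"
    unfolding is_trace_def
  proof (intro conjI allI impI)
    show "(?g \<circ> t) 0 = init U"
      using tr iU inj unfolding is_trace_def rename_behavior_def by auto
    fix j assume "enat j < len"
    then obtain x y where "(x, a (Suc j), y) \<in> trans U" "t j = f x" "t (Suc j) = f y"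
      using tr unfolding is_trace_def rename_behavior_def by auto
    then show "((?g \<circ> t) j, a (Suc j), (?g \<circ> t) (Suc j)) \<in> trans U"
      using trU inj by auto
  qed
  with C have "realizes S C (?g \<circ> t) a len" unfolding exact_composition_def by blast
  then show "realizes S (\<lambda>h (s, a, s'). C h (?g s, a, ?g s')) t a len"
    by (rule realizes_transfer) simp
qed

text \<open>Every approximation is simulation equivalent to one with states in nat, so the
  restriction of optimal_approximation to nat-state competitors loses nothing.\<close>

lemma approximation_nat_representative:
  fixes U :: "('u, 'a) behavior" and S :: "('b, 'a) system"
  assumes approx: "approximation T S U"
  shows "\<exists>U' :: (nat, 'a) behavior. approximation T S U' \<and> U \<sim>\<^sub>s U'"
proof -
  have U: "is_behavior U" and acts: "acts U = acts T" and UT: "U \<preceq>\<^sub>s T"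
    using approx unfolding approximation_def by auto
  obtain C :: "('b, 'a, 'u) controller" where C: "exact_composition C U S"
    using approx unfolding approximation_def by blast
  have fin: "finite (states U)" using U unfolding is_behavior_def by blast
  obtain f :: "'u \<Rightarrow> nat" where inj: "inj_on f (states U)"
    using finite_imp_inj_to_nat_seg[OF fin] by auto
  have renamed_below: "rename_behavior f U \<preceq>\<^sub>s U" using rename_simulated[OF U inj] .
  have "acts (rename_behavior f U) = acts T" using acts by (simp add: rename_behavior_def)
  then have "approximation T S (rename_behavior f U)"
    unfolding approximation_def
    using is_behavior_rename[OF U] simulated_by_trans[OF renamed_below UT]
      exact_composition_rename[OF U inj C] by blast
  then show ?thesis using rename_simulates[OF U] renamed_below unfolding sim_equiv_def by blast
qed

section \<open>Nondeterministic choice between two behaviors\<close>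

definition choice_union :: "('u1, 'a) behavior \<Rightarrow> ('u2, 'a) behavior \<Rightarrow>
    (('u1 + 'u2) option, 'a) behavior" where
  "choice_union T1 T2 = \<lparr>
     states = insert None (Some ` (Inl ` states T1 \<union> Inr ` states T2)),
     acts = acts T1,
     init = None,
     trans = {(None, a, Some (Inl y)) | a y. (init T1, a, y) \<in> trans T1}
       \<union> {(None, a, Some (Inr y)) | a y. (init T2, a, y) \<in> trans T2}
       \<union> {(Some (Inl x), a, Some (Inl y)) | x a y. (x, a, y) \<in> trans T1}
       \<union> {(Some (Inr x), a, Some (Inr y)) | x a y. (x, a, y) \<in> trans T2}\<rparr>"

lemma choice_union_components [simp]:
  "states (choice_union T1 T2) = insert None (Some ` (Inl ` states T1 \<union> Inr ` states T2))"
  "acts (choice_union T1 T2) = acts T1"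
  "init (choice_union T1 T2) = None"
  by (simp_all add: choice_union_def)

lemma choice_union_trans [simp]:
  "(None, a, s') \<in> trans (choice_union T1 T2) \<longleftrightarrow>
     (\<exists>y. s' = Some (Inl y) \<and> (init T1, a, y) \<in> trans T1) \<or>
     (\<exists>y. s' = Some (Inr y) \<and> (init T2, a, y) \<in> trans T2)"
  "(Some (Inl x), a, s') \<in> trans (choice_union T1 T2) \<longleftrightarrow>
     (\<exists>y. s' = Some (Inl y) \<and> (x, a, y) \<in> trans T1)"
  "(Some (Inr x'), a, s') \<in> trans (choice_union T1 T2) \<longleftrightarrow>
     (\<exists>y. s' = Some (Inr y) \<and> (x', a, y) \<in> trans T2)"
  by (auto simp: choice_union_def)

definition dec_left :: "('u1, 'a) behavior \<Rightarrow> ('u1 + 'u2) option \<Rightarrow> 'u1" where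
  "dec_left T1 s = (case s of Some (Inl x) \<Rightarrow> x | _ \<Rightarrow> init T1)"

definition dec_right :: "('u2, 'a) behavior \<Rightarrow> ('u1 + 'u2) option \<Rightarrow> 'u2" where
  "dec_right T2 s = (case s of Some (Inr x) \<Rightarrow> x | _ \<Rightarrow> init T2)"

lemma is_behavior_choice_union:
  assumes T1: "is_behavior T1" and T2: "is_behavior T2" and "acts T1 = acts T2"
  shows "is_behavior (choice_union T1 T2)"
  unfolding is_behavior_def
proof (intro conjI ballI)
  show "finite (states (choice_union T1 T2))"
    using T1 T2 unfolding is_behavior_def by simp
  show "init (choice_union T1 T2) \<in> states (choice_union T1 T2)" by simp
  show "trans (choice_union T1 T2) \<subseteq>
      states (choice_union T1 T2) \<times> acts (choice_union T1 T2) \<times> states (choice_union T1 T2)"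
    using T1 T2 assms(3) unfolding is_behavior_def choice_union_def by auto
  fix b assume "b \<in> states (choice_union T1 T2)"
  then consider "b = None" | x where "x \<in> states T1" "b = Some (Inl x)"
    | x where "x \<in> states T2" "b = Some (Inr x)"
    by auto
  then show "\<exists>a b'. (b, a, b') \<in> trans (choice_union T1 T2)"
  proof cases
    case 1
    obtain a y where "(init T1, a, y) \<in> trans T1" using T1 unfolding is_behavior_def by blast
    then show ?thesis using 1 by auto
  next
    case (2 x)
    then obtain a y where "(x, a, y) \<in> trans T1" using T1 unfolding is_behavior_def by blast
    then show ?thesis using 2 by auto
  next
    case (3 x)
    then obtain a y where "(x, a, y) \<in> trans T2" using T2 unfolding is_behavior_def by blast
    then show ?thesis using 3 by auto
  qed
qed

lemma choice_union_simulates_left: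
  assumes "is_behavior T1" shows "T1 \<preceq>\<^sub>s choice_union T1 T2"
proof -
  let ?R = "insert (init T1, None) {(x, Some (Inl x)) | x. x \<in> states T1}"
  have "is_simulation ?R T1 (choice_union T1 T2)"
    using assms unfolding is_simulation_def is_behavior_def by auto
  then show ?thesis unfolding simulated_by_def by auto
qed

lemma choice_union_simulates_right:
  assumes "is_behavior T2" shows "T2 \<preceq>\<^sub>s choice_union T1 T2"
proof -
  let ?R = "insert (init T2, None) {(x, Some (Inr x)) | x. x \<in> states T2}"
  have "is_simulation ?R T2 (choice_union T1 T2)"
    using assms unfolding is_simulation_def is_behavior_def by auto
  then show ?thesis unfolding simulated_by_def by auto
qed

lemma choice_union_simulated:
  assumes "T1 \<preceq>\<^sub>s T" "T2 \<preceq>\<^sub>s T" "init T \<in> states T"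
  shows "choice_union T1 T2 \<preceq>\<^sub>s T"
proof -
  obtain R1 where R1: "is_simulation R1 T1 T" "(init T1, init T) \<in> R1"
    using assms(1) unfolding simulated_by_def by blast
  obtain R2 where R2: "is_simulation R2 T2 T" "(init T2, init T) \<in> R2"
    using assms(2) unfolding simulated_by_def by blast
  let ?R = "insert (None, init T) ({(Some (Inl x), y) | x y. (x, y) \<in> R1}
              \<union> {(Some (Inr x), y) | x y. (x, y) \<in> R2})"
  have "is_simulation ?R (choice_union T1 T2) T"
    unfolding is_simulation_def
  proof (intro conjI allI impI)
    show "?R \<subseteq> states (choice_union T1 T2) \<times> states T"
      using R1(1) R2(1) assms(3) unfolding is_simulation_def by auto
    fix x z a x' assume "(x, z) \<in> ?R" "(x, a, x') \<in> trans (choice_union T1 T2)"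
    then show "\<exists>z'. (z, a, z') \<in> trans T \<and> (x', z') \<in> ?R"
      using R1 R2 unfolding is_simulation_def by fastforce
  qed
  then show ?thesis unfolding simulated_by_def by auto
qed

lemma choice_union_trace_left:
  assumes tr: "is_trace (choice_union T1 T2) t a len" and first: "t (Suc 0) = Some (Inl y)"
  shows "\<And>j. enat j < len \<Longrightarrow> \<exists>z. t (Suc j) = Some (Inl z)"
    and "is_trace T1 (dec_left T1 \<circ> t) a len"
proof -
  have t0: "t 0 = None" using tr unfolding is_trace_def by simp
  have step: "(t j, a (Suc j), t (Suc j)) \<in> trans (choice_union T1 T2)" if "enat j < len" for j
    using tr that unfolding is_trace_def by simp
  have earlier: "enat i < len" if "enat (Suc i) < len" for i
    using that Suc_ile_eq order_less_imp_le by blast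
  show left: "\<exists>z. t (Suc j) = Some (Inl z)" if "enat j < len" for j
    using that
  proof (induction j)
    case 0 then show ?case using first by blast
  next
    case (Suc j)
    then obtain z where "t (Suc j) = Some (Inl z)" using earlier by blast
    with step[OF Suc.prems] show ?case by auto
  qed
  show "is_trace T1 (dec_left T1 \<circ> t) a len"
    unfolding is_trace_def
  proof (intro conjI allI impI)
    show "(dec_left T1 \<circ> t) 0 = init T1" using t0 by (simp add: dec_left_def)
    fix j assume j: "enat j < len"
    obtain z where z: "t (Suc j) = Some (Inl z)" using left[OF j] by blast
    have "t j = None \<or> (\<exists>x. t j = Some (Inl x))"
      using t0 left earlier j by (cases j) auto
    then show "((dec_left T1 \<circ> t) j, a (Suc j), (dec_left T1 \<circ> t) (Suc j)) \<in> trans T1"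
      using step[OF j] z by (auto simp: dec_left_def)
  qed
qed

lemma choice_union_trace_right:
  assumes tr: "is_trace (choice_union T1 T2) t a len" and first: "t (Suc 0) = Some (Inr y)"
  shows "\<And>j. enat j < len \<Longrightarrow> \<exists>z. t (Suc j) = Some (Inr z)"
    and "is_trace T2 (dec_right T2 \<circ> t) a len"
proof -
  have t0: "t 0 = None" using tr unfolding is_trace_def by simp
  have step: "(t j, a (Suc j), t (Suc j)) \<in> trans (choice_union T1 T2)" if "enat j < len" for j
    using tr that unfolding is_trace_def by simp
  have earlier: "enat i < len" if "enat (Suc i) < len" for i
    using that Suc_ile_eq order_less_imp_le by blast
  show right: "\<exists>z. t (Suc j) = Some (Inr z)" if "enat j < len" for j
    using that
  proof (induction j)
    case 0 then show ?case using first by blast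
  next
    case (Suc j)
    then obtain z where "t (Suc j) = Some (Inr z)" using earlier by blast
    with step[OF Suc.prems] show ?case by auto
  qed
  show "is_trace T2 (dec_right T2 \<circ> t) a len"
    unfolding is_trace_def
  proof (intro conjI allI impI)
    show "(dec_right T2 \<circ> t) 0 = init T2" using t0 by (simp add: dec_right_def)
    fix j assume j: "enat j < len"
    obtain z where z: "t (Suc j) = Some (Inr z)" using right[OF j] by blast
    have "t j = None \<or> (\<exists>x. t j = Some (Inr x))"
      using t0 right earlier j by (cases j) auto
    then show "((dec_right T2 \<circ> t) j, a (Suc j), (dec_right T2 \<circ> t) (Suc j)) \<in> trans T2"
      using step[OF j] z by (auto simp: dec_right_def)
  qed
qed

definition choice_controller ::
  "('u1, 'a) behavior \<Rightarrow> ('u2, 'a) behavior \<Rightarrow> ('b, 'a, 'u1) controller \<Rightarrow>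
   ('b, 'a, 'u2) controller \<Rightarrow> ('b, 'a, ('u1 + 'u2) option) controller" where
  "choice_controller T1 T2 C1 C2 = (\<lambda>h (s, a, s'). case s' of
      Some (Inl y) \<Rightarrow> C1 h (dec_left T1 s, a, y)
    | Some (Inr y) \<Rightarrow> C2 h (dec_right T2 s, a, y)
    | None \<Rightarrow> None)"

lemma exact_composition_choice_union:
  assumes C1: "exact_composition C1 T1 S" and C2: "exact_composition C2 T2 S"
  shows "exact_composition (choice_controller T1 T2 C1 C2) (choice_union T1 T2) S"
  unfolding exact_composition_def
proof (intro allI impI)
  fix t a len assume tr: "is_trace (choice_union T1 T2) t a len"
  show "realizes S (choice_controller T1 T2 C1 C2) t a len"
  proof (cases "len = 0")
    case True
    then show ?thesis using realizes_empty_trace by simp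
  next
    case False
    then have "enat 0 < len" by (simp add: zero_enat_def[symmetric] not_gr_zero)
    with tr have "(None, a (Suc 0), t (Suc 0)) \<in> trans (choice_union T1 T2)"
      unfolding is_trace_def by (metis choice_union_components(3))
    then consider y where "t (Suc 0) = Some (Inl y)" | y where "t (Suc 0) = Some (Inr y)"
      by auto
    then show ?thesis
    proof cases
      case (1 y)
      note left = choice_union_trace_left[OF tr 1]
      from C1 left(2) have "realizes S C1 (dec_left T1 \<circ> t) a len"
        unfolding exact_composition_def by blast
      then show ?thesis
        by (rule realizes_transfer) (auto dest!: left(1) simp: choice_controller_def dec_left_def)
    next
      case (2 y)
      note right = choice_union_trace_right[OF tr 2]
      from C2 right(2) have "realizes S C2 (dec_right T2 \<circ> t) a len"
        unfolding exact_composition_def by blast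
      then show ?thesis
        by (rule realizes_transfer) (auto dest!: right(1) simp: choice_controller_def dec_right_def)
    qed
  qed
qed

lemma approximation_choice_union:
  assumes T: "is_behavior T" and A1: "approximation T S T1" and A2: "approximation T S T2"
  shows "approximation T S (choice_union T1 T2)"
proof -
  have T1: "is_behavior T1" "acts T1 = acts T" "T1 \<preceq>\<^sub>s T"
    and T2: "is_behavior T2" "acts T2 = acts T" "T2 \<preceq>\<^sub>s T"
    using A1 A2 unfolding approximation_def by auto
  obtain C1 where "exact_composition C1 T1 S" using A1 unfolding approximation_def by blast
  moreover obtain C2 where "exact_composition C2 T2 S" using A2 unfolding approximation_def by blast
  ultimately have "exact_composition (choice_controller T1 T2 C1 C2) (choice_union T1 T2) S"
    by (rule exact_composition_choice_union)
  moreover have "choice_union T1 T2 \<preceq>\<^sub>s T"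
    using T1(3) T2(3) T by (simp add: choice_union_simulated is_behavior_def)
  moreover have "is_behavior (choice_union T1 T2)"
    using T1(1,2) T2(1,2) by (simp add: is_behavior_choice_union)
  moreover have "acts (choice_union T1 T2) = acts T" using T1(2) by simp
  ultimately show ?thesis unfolding approximation_def by blast
qed

lemma optimal_approximation_maximal:
  fixes T :: "('t, 'a) behavior" and S :: "('b, 'a) system"
    and T1 :: "('u1, 'a) behavior" and U :: "('u, 'a) behavior"
  assumes opt: "optimal_approximation T S T1" and U: "approximation T S U"
    and below: "T1 \<preceq>\<^sub>s U"
  shows "U \<preceq>\<^sub>s T1"
proof -
  obtain U' :: "(nat, 'a) behavior" where U': "approximation T S U'" "U \<sim>\<^sub>s U'"
    using approximation_nat_representative[OF U] by blast
  then have "T1 \<preceq>\<^sub>s U'" using below simulated_by_trans unfolding sim_equiv_def by blast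
  with opt U' have "U' \<preceq>\<^sub>s T1"
    unfolding optimal_approximation_def strictly_simulated_by_def by blast
  with U'(2) show ?thesis using simulated_by_trans unfolding sim_equiv_def by blast
qed

theorem theorem2:
  fixes S :: "('b, 'a) system"
    and T :: "('t, 'a) behavior"
    and T1 :: "('u1, 'a) behavior"
    and T2 :: "('u2, 'a) behavior"
  assumes "is_system S"
    and "is_behavior T"
    and "optimal_approximation T S T1"
    and "optimal_approximation T S T2"
  shows "T1 \<sim>\<^sub>s T2"
proof -
  have A1: "approximation T S T1" and A2: "approximation T S T2"
    using assms(3,4) unfolding optimal_approximation_def by auto
  let ?U = "choice_union T1 T2"
  have U: "approximation T S ?U" using approximation_choice_union[OF assms(2) A1 A2] .
  have T1_U: "T1 \<preceq>\<^sub>s ?U" and T2_U: "T2 \<preceq>\<^sub>s ?U"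
    using A1 A2 choice_union_simulates_left choice_union_simulates_right
    unfolding approximation_def by blast+
  have U_T1: "?U \<preceq>\<^sub>s T1" using optimal_approximation_maximal[OF assms(3) U T1_U] .
  have U_T2: "?U \<preceq>\<^sub>s T2" using optimal_approximation_maximal[OF assms(4) U T2_U] .
  show ?thesis
    unfolding sim_equiv_def
    using simulated_by_trans[OF T1_U U_T2] simulated_by_trans[OF T2_U U_T1] by blast
qed

end
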